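(* Let $a,b\in\mathbb C\setminus\{-2,2\}$ with $a\neq b$ and let $\tilde C$ be the genus $3$ hyperelliptic curve $y^2=(x^4+ax^2+1)(x^4+bx^2+1)$ with hyperelliptic involution $\iota$. Let $\sigma,\tau$ be involutions of $\tilde C$, each with exactly $4$ fixed points, inducing on the $x$-line $\mathbb P^1$ the involutions $\bar\sigma([x:y])=[-x:y]$ and $\bar\tau([x:y])=[y:x]$. Then the quotient curves have the following defining equations: $\tilde C/\langle\iota\tau\rangle:\ y^2=(x^2-4)(x^2+a-2)(x^2+b-2)$; $\tilde C/\langle\iota\sigma\rangle:\ y^2=x(x^2+ax+1)(x^2+bx+1)$; $\tilde C/\langle\iota\sigma\tau\rangle:\ y^2=(x^2+4)(x^2+a+2)(x^2+b+2)$; $\tilde C/\langle\tau\rangle:\ y^2=(x^2+a-2)(x^2+b-2)$; $\tilde C/\langle\sigma\rangle:\ y^2=(x^2+ax+1)(x^2+bx+1)$; $\tilde C/\langle\sigma\tau\rangle:\ y^2=(x^2+a+2)(x^2+b+2)$; $\tilde C/\langle\iota\sigma,\iota\tau\rangle:\ y^2=(x+a)(x+b)(x-2)$; $\tilde C/\langle\iota\tau,\sigma\rangle:\ y^2=(x+a)(x+b)(x-2)(x+2)$; $\tilde C/\langle\iota\sigma,\tau\rangle:\ y^2=(x+a)(x+b)(x+2)$.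
   Context: Each of $\bar\sigma,\bar\tau$ has two lifts to $\tilde C$ (differing by $\iota$); exactly one of them has $4$ fixed points and the other is fixed-point free. *)

theory Defs
  imports "HOL-Algebra.Ring" "HOL-Algebra.RingHom" "HOL-Algebra.Subrings"
    "HOL-Computational_Algebra.Polynomial" "HOL-Computational_Algebra.Fraction_Field"
begin

type_synonym rfun = "complex poly fract"

text \<open>An element (r0, r1) stands for r0 + r1 * y in the function field
  C(x)[y]/(y^2 - f(x)) of the (smooth projective) curve y^2 = f(x).\<close>
type_synonym ffel = "rfun \<times> rfun"

definition rpoly :: "complex poly \<Rightarrow> rfun" where
  "rpoly p = Fract p 1"

definition ff_mult :: "complex poly \<Rightarrow> ffel \<Rightarrow> ffel \<Rightarrow> ffel" where
  "ff_mult f u v = (fst u * fst v + rpoly f * snd u * snd v, fst u * snd v + snd u * fst v)"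

definition ff_add :: "ffel \<Rightarrow> ffel \<Rightarrow> ffel" where
  "ff_add u v = (fst u + fst v, snd u + snd v)"

definition FF :: "complex poly \<Rightarrow> ffel ring" where
  "FF f = \<lparr>carrier = UNIV, monoid.mult = ff_mult f, one = (1, 0),
           zero = (0, 0), add = ff_add\<rparr>"

definition cst :: "complex \<Rightarrow> ffel" where
  "cst c = (rpoly [:c:], 0)"

definition xx :: ffel where
  "xx = (rpoly [:0, 1:], 0)"

text \<open>Automorphisms of the curve y^2 = f(x), acting (by pull-back) on its
  function field: C-algebra automorphisms of the function field.\<close>
definition curve_aut :: "complex poly \<Rightarrow> (ffel \<Rightarrow> ffel) \<Rightarrow> bool" where
  "curve_aut f s \<longleftrightarrow> s \<in> ring_iso (FF f) (FF f) \<and> (\<forall>c. s (cst c) = cst c)"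

definition curve_involution :: "complex poly \<Rightarrow> (ffel \<Rightarrow> ffel) \<Rightarrow> bool" where
  "curve_involution f s \<longleftrightarrow> curve_aut f s \<and> s \<circ> s = id \<and> s \<noteq> id"

text \<open>Points of the smooth projective curve = places of its function field
  over C, i.e. valuation rings O with C \<subset> O \<subset> K, O \<noteq> K.\<close>
definition place :: "complex poly \<Rightarrow> ffel set \<Rightarrow> bool" where
  "place f V \<longleftrightarrow> subring V (FF f) \<and> range cst \<subseteq> V \<and> V \<noteq> carrier (FF f) \<and>
     (\<forall>z \<in> carrier (FF f). z \<noteq> \<zero>\<^bsub>FF f\<^esub> \<longrightarrow> z \<in> V \<or> inv\<^bsub>FF f\<^esub> z \<in> V)"

definition fixed_points :: "complex poly \<Rightarrow> (ffel \<Rightarrow> ffel) \<Rightarrow> ffel set set" where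
  "fixed_points f s = {V. place f V \<and> s ` V = V}"

text \<open>Function field of the quotient curve by the group generated by the
  automorphisms in G: the fixed subfield.\<close>
definition quot_field :: "complex poly \<Rightarrow> (ffel \<Rightarrow> ffel) set \<Rightarrow> ffel ring" where
  "quot_field f G = (FF f)\<lparr>carrier := {z. \<forall>s \<in> G. s z = z}\<rparr>"

text \<open>The quotient curve has defining equation y^2 = g(x): its function field
  is C-isomorphic to that of y^2 = g(x) (equivalently, the smooth projective
  models are isomorphic).\<close>
definition quotient_has_eq :: "complex poly \<Rightarrow> (ffel \<Rightarrow> ffel) set \<Rightarrow> complex poly \<Rightarrow> bool" where
  "quotient_has_eq f G g \<longleftrightarrow>
     (\<exists>h. h \<in> ring_iso (quot_field f G) (FF g) \<and> (\<forall>c. h (cst c) = cst c))"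

definition hyp_inv :: "ffel \<Rightarrow> ffel" where
  "hyp_inv u = (fst u, - snd u)"

end

(* An automorphism acting on
   C(x) as the substitution x |-> u sends y to k y, where k^2 f = f(u). For x |-> -x and
   x |-> 1/x this leaves two lifts, and one of them has no fixed place: at a place stable under
   it the residue of y (of y/x^4 over oo) would be its own negative, whereas over x = 0, oo
   (resp. x = 1, -1) this residue is nonzero. So sigma and tau are the other lifts, and each of
   the nine groups acts by such twisted substitutions x |-> u, y |-> k y. Its fixed field is
   C(t) + C(t) e y, where C(t) is the fixed field of the substitutions (C(x^2), C(x + 1/x),
   C(x - 1/x) or C(x^2 + 1/x^2), the middle ones obtained by conjugating x |-> -x) and
   k e(u) = e for all its elements; the quotient is y^2 = g(x) as soon as g(t) = e^2 f. *)

theory Submission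
  imports Defs "HOL-Computational_Algebra.Fundamental_Theorem_Algebra" "HOL-Algebra.QuotRing"
begin

section \<open>Substitution in rational functions\<close>

instance fract :: ("{idom,ring_char_0}") ring_char_0
  by standard (auto intro!: injI simp: of_nat_fract eq_fract)

definition rconst :: "complex \<Rightarrow> rfun" where
  "rconst c = rpoly [:c:]"

definition X :: rfun where
  "X = rpoly [:0, 1:]"

definition poly_rfun :: "complex poly \<Rightarrow> rfun \<Rightarrow> rfun" where
  "poly_rfun p t = poly (map_poly rconst p) t"

definition nonconst :: "rfun \<Rightarrow> bool" where
  "nonconst t \<longleftrightarrow> t \<notin> range rconst"

lemma rpoly_add [simp]: "rpoly (p + q) = rpoly p + rpoly q"
  and rpoly_mult [simp]: "rpoly (p * q) = rpoly p * rpoly q"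
  and rpoly_minus [simp]: "rpoly (- p) = - rpoly p"
  and rpoly_diff [simp]: "rpoly (p - q) = rpoly p - rpoly q"
  and rpoly_0 [simp]: "rpoly 0 = 0"
  and rpoly_1 [simp]: "rpoly 1 = 1"
  and rpoly_eq_iff [simp]: "rpoly p = rpoly q \<longleftrightarrow> p = q"
  by (simp_all add: rpoly_def fract_collapse eq_fract)

lemma rpoly_eq_0_iff [simp]: "rpoly p = 0 \<longleftrightarrow> p = 0"
  using rpoly_eq_iff[of p 0] by (simp del: rpoly_eq_iff)

lemma rconst_add [simp]: "rconst (a + b) = rconst a + rconst b"
  and rconst_mult [simp]: "rconst (a * b) = rconst a * rconst b"
  and rconst_minus [simp]: "rconst (- a) = - rconst a"
  and rconst_diff [simp]: "rconst (a - b) = rconst a - rconst b"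
  and rconst_0 [simp]: "rconst 0 = 0"
  and rconst_1 [simp]: "rconst 1 = 1"
  and rconst_eq_iff [simp]: "rconst a = rconst b \<longleftrightarrow> a = b"
  by (simp_all add: rconst_def flip: rpoly_add rpoly_mult rpoly_minus rpoly_diff one_pCons)

lemma rconst_eq_0_iff [simp]: "rconst a = 0 \<longleftrightarrow> a = 0"
  using rconst_eq_iff[of a 0] by (simp del: rconst_eq_iff)

lemma rconst_of_nat [simp]: "rconst (of_nat n) = of_nat n"
  by (induction n) simp_all

lemma rconst_numeral [simp]: "rconst (numeral n) = numeral n"
  using rconst_of_nat[of "numeral n"] by (simp only: of_nat_numeral)

lemma rconst_inverse [simp]: "rconst (inverse a) = inverse (rconst a)"
proof (cases "a = 0")
  case False
  then have "rconst (inverse a) * rconst a = 1" by (simp flip: rconst_mult)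
  then show ?thesis by (rule inverse_unique[symmetric, OF trans[OF mult.commute]])
qed simp

lemma rpoly_pCons: "rpoly (pCons a p) = rconst a + X * rpoly p"
proof -
  have "pCons a p = [:a:] + [:0, 1:] * p" by simp
  then show ?thesis unfolding rconst_def X_def by (metis rpoly_add rpoly_mult)
qed

lemma rconst_mult_rpoly: "rconst c * rpoly q = rpoly (smult c q)"
  by (simp add: rconst_def flip: rpoly_mult)

lemma poly_rfun_0 [simp]: "poly_rfun 0 t = 0"
  and poly_rfun_pCons [simp]: "poly_rfun (pCons a p) t = rconst a + t * poly_rfun p t"
  by (simp_all add: poly_rfun_def map_poly_pCons)

lemma poly_rfun_1 [simp]: "poly_rfun 1 t = 1"
  by (simp add: one_pCons)

lemma poly_rfun_add [simp]: "poly_rfun (p + q) t = poly_rfun p t + poly_rfun q t"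
proof (induction p arbitrary: q)
  case (pCons a p)
  then show ?case by (cases q) (simp add: algebra_simps)
qed simp

lemma poly_rfun_smult [simp]: "poly_rfun (smult c p) t = rconst c * poly_rfun p t"
  by (induction p) (simp_all add: algebra_simps)

lemma poly_rfun_mult [simp]: "poly_rfun (p * q) t = poly_rfun p t * poly_rfun q t"
  by (induction p) (simp_all add: algebra_simps)

lemma poly_rfun_minus [simp]: "poly_rfun (- p) t = - poly_rfun p t"
  using poly_rfun_add[of p "- p" t] by (simp add: eq_neg_iff_add_eq_0 add.commute)

lemma poly_rfun_diff [simp]: "poly_rfun (p - q) t = poly_rfun p t - poly_rfun q t"
  using poly_rfun_add[of p "- q" t] by simp

lemma poly_rfun_X: "poly_rfun p X = rpoly p"
  by (induction p) (simp_all add: rpoly_pCons)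

lemma poly_rfun_pcompose: "poly_rfun (pcompose p q) t = poly_rfun p (poly_rfun q t)"
  by (induction p) (simp_all add: pcompose_pCons)

lemma complex_poly_linear_induct [consumes 1, case_names const linear]:
  fixes p :: "complex poly"
  assumes "p \<noteq> 0"
    and const: "\<And>c. c \<noteq> 0 \<Longrightarrow> P [:c:]"
    and linear: "\<And>z q. q \<noteq> 0 \<Longrightarrow> P q \<Longrightarrow> P ([:-z, 1:] * q)"
  shows "P p"
  using assms(1)
proof (induction "degree p" arbitrary: p)
  case 0
  then obtain c where "p = [:c:]" by (metis degree_eq_zeroE)
  with 0 const show ?case by simp
next
  case (Suc n)
  have "\<exists>z. poly p z = 0"
    by (rule fundamental_theorem_of_algebra_alt) (use Suc(2) in auto)
  then obtain z where "poly p z = 0" ..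
  then obtain q where q: "p = [:-z, 1:] * q" by (auto simp: poly_eq_0_iff_dvd)
  with Suc.prems have "q \<noteq> 0" by auto
  with q Suc(2) have "degree q = n" by (simp add: degree_mult_eq del: mult_pCons_left)
  with Suc.hyps \<open>q \<noteq> 0\<close> q linear show ?case by blast
qed

lemma poly_rfun_nonzero:
  assumes "nonconst t" "p \<noteq> 0"
  shows "poly_rfun p t \<noteq> 0"
  using assms(2)
proof (induction p rule: complex_poly_linear_induct)
  case (linear z q)
  moreover have "t - rconst z \<noteq> 0" using assms(1) by (auto simp: nonconst_def)
  ultimately show ?case by simp
qed simp

text \<open>\<open>rsubst t r\<close> is \<open>r(t)\<close>. The choice of the representative of \<open>r\<close> is harmless only
  for nonconstant \<open>t\<close>, where no denominator vanishes.\<close>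

definition rsubst :: "rfun \<Rightarrow> rfun \<Rightarrow> rfun" where
  "rsubst t r = (let pq = (SOME pq. snd pq \<noteq> 0 \<and> r = Fract (fst pq) (snd pq))
                 in poly_rfun (fst pq) t / poly_rfun (snd pq) t)"

lemma Fract_eq_divide: "q \<noteq> 0 \<Longrightarrow> Fract p q = rpoly p / rpoly q"
  by (simp add: rpoly_def)

lemma rsubst_Fract:
  assumes t: "nonconst t" and q: "q \<noteq> 0"
  shows "rsubst t (Fract p q) = poly_rfun p t / poly_rfun q t"
proof -
  define pq where "pq = (SOME pq. snd pq \<noteq> 0 \<and> Fract p q = Fract (fst pq) (snd pq))"
  have "snd pq \<noteq> 0 \<and> Fract p q = Fract (fst pq) (snd pq)"
    unfolding pq_def by (rule someI[of _ "(p, q)"]) (simp add: q)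
  then have "snd pq \<noteq> 0" "p * snd pq = fst pq * q"
    using q by (auto simp: eq_fract)
  then have "poly_rfun p t * poly_rfun (snd pq) t = poly_rfun (fst pq) t * poly_rfun q t"
    "poly_rfun (snd pq) t \<noteq> 0" "poly_rfun q t \<noteq> 0"
    using poly_rfun_nonzero[OF t] q by (metis poly_rfun_mult)+
  then show ?thesis
    unfolding rsubst_def pq_def[symmetric] Let_def by (simp add: field_simps)
qed

lemma rsubst_rpoly [simp]: "nonconst t \<Longrightarrow> rsubst t (rpoly p) = poly_rfun p t"
  using rsubst_Fract[of t 1 p] by (simp add: rpoly_def)

lemma rsubst_add [simp]: "nonconst t \<Longrightarrow> rsubst t (r + s) = rsubst t r + rsubst t s"
  and rsubst_mult [simp]: "nonconst t \<Longrightarrow> rsubst t (r * s) = rsubst t r * rsubst t s"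
  by (cases r; cases s; simp add: rsubst_Fract poly_rfun_nonzero field_simps)+

lemma rsubst_rconst [simp]: "nonconst t \<Longrightarrow> rsubst t (rconst c) = rconst c"
  using rsubst_rpoly[of t "[:c:]"] by (simp flip: rconst_def)

lemma rsubst_0 [simp]: "nonconst t \<Longrightarrow> rsubst t 0 = 0"
  and rsubst_1 [simp]: "nonconst t \<Longrightarrow> rsubst t 1 = 1"
  and rsubst_numeral [simp]: "nonconst t \<Longrightarrow> rsubst t (numeral n) = numeral n"
  using rsubst_rconst[of t 0] rsubst_rconst[of t 1] rsubst_rconst[of t "numeral n"] by simp_all

lemma rsubst_X [simp]: "nonconst t \<Longrightarrow> rsubst t X = t"
  by (simp add: X_def)

lemma rsubst_minus [simp]: "nonconst t \<Longrightarrow> rsubst t (- r) = - rsubst t r"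
  using rsubst_add[of t r "- r"] by (simp add: eq_neg_iff_add_eq_0 add.commute)

lemma rsubst_diff [simp]: "nonconst t \<Longrightarrow> rsubst t (r - s) = rsubst t r - rsubst t s"
  using rsubst_add[of t r "- s"] by simp

lemma rsubst_inverse [simp]: "nonconst t \<Longrightarrow> rsubst t (inverse r) = inverse (rsubst t r)"
proof (cases "r = 0")
  case False
  assume t: "nonconst t"
  have "rsubst t r * rsubst t (inverse r) = 1"
    using False t by (simp flip: rsubst_mult)
  then show ?thesis by (rule inverse_unique[symmetric])
qed simp

lemma rsubst_divide [simp]: "nonconst t \<Longrightarrow> rsubst t (r / s) = rsubst t r / rsubst t s"
  by (simp add: divide_inverse)

lemma rsubst_power [simp]: "nonconst t \<Longrightarrow> rsubst t (r ^ n) = rsubst t r ^ n"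
  by (induction n) simp_all

lemma rsubst_eq_iff [simp]: "nonconst t \<Longrightarrow> rsubst t r = rsubst t s \<longleftrightarrow> r = s"
proof
  assume t: "nonconst t" and "rsubst t r = rsubst t s"
  then have "rsubst t (r - s) = 0" by simp
  show "r = s"
  proof (rule ccontr)
    assume "r \<noteq> s"
    then have "rsubst t ((r - s) * inverse (r - s)) = 1" using t by simp
    with \<open>rsubst t (r - s) = 0\<close> t show False by simp
  qed
qed simp

lemma rsubst_unique:
  assumes t: "nonconst t"
    and add: "\<And>r s. \<phi> (r + s) = \<phi> r + \<phi> s"
    and mult: "\<And>r s. \<phi> (r * s) = \<phi> r * \<phi> s"
    and const: "\<And>c. \<phi> (rconst c) = rconst c"
    and X: "\<phi> X = t"
  shows "\<phi> r = rsubst t r"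
proof -
  have poly: "\<phi> (rpoly p) = poly_rfun p t" for p
    by (induction p) (simp_all add: rpoly_pCons add mult const X flip: rconst_0)
  have inverse: "\<phi> (inverse s) = inverse (\<phi> s)" for s
  proof (cases "s = 0")
    case False
    have "\<phi> s * \<phi> (inverse s) = 1" using False const[of 1] by (metis mult right_inverse rconst_1)
    then show ?thesis by (rule inverse_unique[symmetric])
  qed (use const[of 0] in simp)
  show ?thesis
    by (cases r) (simp add: t Fract_eq_divide rsubst_Fract divide_inverse mult inverse poly)
qed

lemma nonconst_X [simp]: "nonconst X"
  by (auto simp: nonconst_def X_def rconst_def)

lemma rsubst_X_left [simp]: "rsubst X r = r"
  using rsubst_unique[of X id r] by simp

lemma nonconst_rsubst:
  assumes "nonconst t" "nonconst u"
  shows "nonconst (rsubst u t)"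
proof -
  have "rsubst u t \<noteq> rconst c" for c
  proof
    assume "rsubst u t = rconst c"
    then have "rsubst u t = rsubst u (rconst c)" using assms(2) by simp
    then show False using assms by (subst (asm) rsubst_eq_iff) (auto simp: nonconst_def)
  qed
  then show ?thesis by (auto simp: nonconst_def)
qed

lemma rsubst_rsubst:
  "nonconst t \<Longrightarrow> nonconst u \<Longrightarrow> rsubst u (rsubst t r) = rsubst (rsubst u t) r"
  by (rule rsubst_unique) (simp_all add: nonconst_rsubst)

lemma nonconst_nonzero: "nonconst t \<Longrightarrow> t \<noteq> 0"
  using rconst_0 by (auto simp: nonconst_def simp del: rconst_0)

lemma nonconst_ratio:
  assumes "t * rpoly q = rpoly p" "\<And>c. p \<noteq> smult c q"
  shows "nonconst t"
  using assms by (fastforce simp: nonconst_def rconst_mult_rpoly)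

section \<open>The fixed fields of \<open>x \<mapsto> -x\<close>, \<open>x \<mapsto> 1/x\<close> and \<open>x \<mapsto> -1/x\<close>\<close>

lemma X_neq_rconst [simp]: "X \<noteq> rconst c"
  using nonconst_X by (auto simp: nonconst_def)

lemma X_nonzero [simp]: "X \<noteq> 0"
  using X_neq_rconst[of 0] by simp

lemma nonconst_simps [simp]:
  "nonconst (- X)" "nonconst (inverse X)" "nonconst (- inverse X)" "nonconst (X^2)"
  "nonconst (X + inverse X)" "nonconst (X - inverse X)" "nonconst (X^2 + inverse (X^2))"
proof -
  show "nonconst (- X)"
    by (rule nonconst_ratio[of _ 1 "[:0, -1:]"]) (simp_all add: rpoly_pCons)
  show "nonconst (inverse X)"
    by (rule nonconst_ratio[of _ "[:0, 1:]" 1]) (simp_all add: rpoly_pCons one_pCons)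
  show "nonconst (- inverse X)"
    by (rule nonconst_ratio[of _ "[:0, 1:]" "-1"]) (simp_all add: rpoly_pCons one_pCons)
  show "nonconst (X^2)"
    by (rule nonconst_ratio[of _ 1 "[:0, 0, 1:]"]) (simp_all add: rpoly_pCons power2_eq_square)
  show "nonconst (X + inverse X)"
    by (rule nonconst_ratio[of _ "[:0, 1:]" "[:1, 0, 1:]"]) (simp_all add: rpoly_pCons field_simps)
  show "nonconst (X - inverse X)"
    by (rule nonconst_ratio[of _ "[:0, 1:]" "[:-1, 0, 1:]"]) (simp_all add: rpoly_pCons field_simps)
  show "nonconst (X^2 + inverse (X^2))"
    by (rule nonconst_ratio[of _ "[:0, 0, 1:]" "[:1, 0, 0, 0, 1:]"])
      (simp_all add: rpoly_pCons field_simps power2_eq_square)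
qed

lemma X_plus_minus_inverse_X_nonzero [simp]:
  "X + inverse X \<noteq> 0" "X - inverse X \<noteq> 0" "X \<noteq> inverse X" "X \<noteq> - inverse X"
proof -
  show "X + inverse X \<noteq> 0" "X - inverse X \<noteq> 0"
    using nonconst_nonzero nonconst_simps(5,6) by blast+
  then show "X \<noteq> inverse X" "X \<noteq> - inverse X"
    by (auto simp: eq_neg_iff_add_eq_0)
qed

lemma rpoly_even_odd: "\<exists>e d. rpoly p = rsubst (X^2) e + X * rsubst (X^2) d"
proof (induction p)
  case (pCons a p)
  then obtain e d where ed: "rpoly p = rsubst (X^2) e + X * rsubst (X^2) d" by blast
  have "rsubst (X^2) (rconst a + X * d) = rconst a + X^2 * rsubst (X^2) d"
    by simp
  then have "rpoly (pCons a p) = rsubst (X^2) (rconst a + X * d) + X * rsubst (X^2) e"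
    using ed by (simp add: rpoly_pCons algebra_simps power2_eq_square)
  then show ?case by blast
qed (rule exI[of _ 0], rule exI[of _ 0], simp)

lemma even_rpoly_in_range:
  assumes "rsubst (- X) (rpoly p) = rpoly p"
  shows "rpoly p \<in> range (rsubst (X^2))"
proof -
  obtain e d where ed: "rpoly p = rsubst (X^2) e + X * rsubst (X^2) d"
    using rpoly_even_odd by blast
  have "rsubst (- X) (rsubst (X^2) s) = rsubst (X^2) s" for s
    by (simp add: rsubst_rsubst)
  then have "rsubst (- X) (rpoly p) = rsubst (X^2) e - X * rsubst (X^2) d"
    unfolding ed by simp
  with assms ed have "2 * X * rsubst (X^2) d = 0" by (simp add: algebra_simps)
  with ed show ?thesis by auto
qed

lemma fixed_neg_X: "{r. rsubst (- X) r = r} = range (rsubst (X^2))"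
proof (intro equalityI subsetI; clarsimp)
  fix r assume r: "rsubst (- X) r = r"
  obtain p q where pq: "r = Fract p q" "q \<noteq> 0" by (cases r)
  define q' where "q' = pcompose q [:0, -1:]"
  have q'0: "q' \<noteq> 0" using pq(2) by (simp add: q'_def pcompose_eq_0_iff)
  have "rsubst (- X) (rpoly q) = poly_rfun q (poly_rfun [:0, -1:] X)"
    by simp
  also have "\<dots> = rpoly q'"
    by (simp only: q'_def poly_rfun_pcompose flip: poly_rfun_X)
  finally have q': "rsubst (- X) (rpoly q) = rpoly q'" .
  have invol: "rsubst (- X) (rsubst (- X) s) = s" for s
    by (simp add: rsubst_rsubst)
  have den: "rsubst (- X) (rpoly (q * q')) = rpoly (q * q')"
    using invol[of "rpoly q"] by (simp add: q' mult.commute)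
  have num: "rpoly (p * q') = r * rpoly (q * q')"
    using pq by (simp add: Fract_eq_divide)
  then have "rsubst (- X) (rpoly (p * q')) = rpoly (p * q')"
    by (simp only: rsubst_mult[OF nonconst_simps(1)] r den)
  then obtain a b where "rpoly (p * q') = rsubst (X^2) a" "rpoly (q * q') = rsubst (X^2) b"
    using even_rpoly_in_range den by blast
  moreover have "rpoly (q * q') \<noteq> 0" using pq(2) q'0 by simp
  ultimately have "r = rsubst (X^2) (a / b)"
    using num by (simp add: field_simps)
  then show "r \<in> range (rsubst (X^2))" by blast
qed (simp add: rsubst_rsubst)

lemma fixed_field_conj:
  assumes nc: "nonconst m" "nonconst n" "nonconst u" "nonconst v" "nonconst t"
    and inv: "rsubst m n = X" "rsubst n m = X"
    and conj: "rsubst m u = rsubst v m"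
    and fixed: "{r. rsubst v r = r} = range (rsubst t)"
  shows "{r. rsubst u r = r} = range (rsubst (rsubst n t))"
proof -
  have n_m: "rsubst n (rsubst m r) = r" for r
    using nc inv by (simp add: rsubst_rsubst)
  have intertwine: "rsubst v (rsubst m r) = rsubst m (rsubst u r)" for r
    using nc conj by (simp add: rsubst_rsubst)
  have "rsubst u r = r \<longleftrightarrow> rsubst m r \<in> range (rsubst t)" for r
  proof -
    have "rsubst u r = r \<longleftrightarrow> rsubst m (rsubst u r) = rsubst m r"
      using nc by simp
    also have "\<dots> \<longleftrightarrow> rsubst v (rsubst m r) = rsubst m r"
      by (simp only: intertwine)
    also have "\<dots> \<longleftrightarrow> rsubst m r \<in> range (rsubst t)"
      using fixed by blast
    finally show ?thesis .
  qed
  also have "rsubst m r \<in> range (rsubst t) \<longleftrightarrow> r \<in> range (rsubst (rsubst n t))" for r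
  proof
    assume "rsubst m r \<in> range (rsubst t)"
    then obtain s where "rsubst m r = rsubst t s" by blast
    then have "r = rsubst n (rsubst t s)" by (metis n_m)
    then show "r \<in> range (rsubst (rsubst n t))" using nc by (simp add: rsubst_rsubst)
  next
    assume "r \<in> range (rsubst (rsubst n t))"
    then obtain s where "r = rsubst (rsubst n t) s" by blast
    then have "rsubst m r = rsubst t s"
      using nc inv by (simp add: rsubst_rsubst nonconst_rsubst)
    then show "rsubst m r \<in> range (rsubst t)" by blast
  qed
  finally show ?thesis by blast
qed

lemma range_rsubst_rsubst:
  assumes nc: "nonconst t" "nonconst w" "nonconst w'" and inv: "rsubst w w' = X"
  shows "range (rsubst (rsubst t w)) = range (rsubst t)"
proof -
  have comp: "rsubst (rsubst t w) s = rsubst t (rsubst w s)" for s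
    using nc by (simp add: rsubst_rsubst)
  have "rsubst t s = rsubst t (rsubst w (rsubst w' s))" for s
    using nc inv by (simp add: rsubst_rsubst)
  then have "rsubst t s = rsubst (rsubst t w) (rsubst w' s)" for s
    by (simp only: comp)
  then show ?thesis
    by (auto simp only: comp image_iff) blast+
qed

lemma X_neq_numeral [simp]:
  "X \<noteq> 1" "1 \<noteq> X" "X \<noteq> -1" "-1 \<noteq> X" "X \<noteq> 2" "2 \<noteq> X" "X \<noteq> -2" "-2 \<noteq> X"
  using X_neq_rconst[of 1] X_neq_rconst[of "-1"] X_neq_rconst[of 2] X_neq_rconst[of "-2"]
  by (simp_all del: X_neq_rconst)

lemma X_plus_const_nonzero [simp]:
  "X + 1 \<noteq> 0" "1 + X \<noteq> 0" "X - 1 \<noteq> 0" "1 - X \<noteq> 0" "X + 2 \<noteq> 0" "2 + X \<noteq> 0"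
  by (simp_all add: add_eq_0_iff add_eq_0_iff2 minus_equation_iff[of X])

lemma nonconst_moebius:
  fixes a b c d :: complex
  assumes "a * d \<noteq> b * c"
  shows "nonconst (rpoly [:b, a:] / rpoly [:d, c:])"
proof (rule nonconst_ratio)
  have "[:d, c:] \<noteq> 0" using assms by auto
  then show "rpoly [:b, a:] / rpoly [:d, c:] * rpoly [:d, c:] = rpoly [:b, a:]" by simp
  show "[:b, a:] \<noteq> smult k [:d, c:]" for k
    using assms by auto
qed

lemma cayley_transform:
  defines "m \<equiv> (1 + X) / (1 - X)" and "n \<equiv> (X - 1) / (X + 1)"
  shows "nonconst m" "nonconst n" "rsubst m n = X" "rsubst n m = X"
    and "rsubst m (inverse X) = rsubst (- X) m"
proof -
  show nc: "nonconst m" "nonconst n"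
    using nonconst_moebius[where a = 1 and b = 1 and c = "-1" and d = 1]
      nonconst_moebius[where a = 1 and b = "-1" and c = 1 and d = 1]
    by (simp_all add: m_def n_def rpoly_pCons algebra_simps)
  have m_eqs: "m - 1 = 2 * X / (1 - X)" "m + 1 = 2 / (1 - X)"
    by (simp_all add: m_def field_simps)
  have "rsubst m n = (m - 1) / (m + 1)"
    using nc by (simp add: n_def)
  also have "\<dots> = X"
    unfolding m_eqs by (simp add: divide_divide_times_eq)
  finally show "rsubst m n = X" .
  have n_eqs: "1 + n = 2 * X / (X + 1)" "1 - n = 2 / (X + 1)"
    by (simp_all add: n_def field_simps)
  have "rsubst n m = (1 + n) / (1 - n)"
    using nc by (simp add: m_def)
  also have "\<dots> = X"
    unfolding n_eqs by (simp add: divide_divide_times_eq)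
  finally show "rsubst n m = X" .
  show "rsubst m (inverse X) = rsubst (- X) m"
    using nc by (simp add: m_def field_simps)
qed

lemma fixed_inverse_X: "{r. rsubst (inverse X) r = r} = range (rsubst (X + inverse X))"
proof -
  define w where "w = (X - 2) / (X + 2)"
  define w' where "w' = 2 * (1 + X) / (1 - X)"
  have nc: "nonconst w" "nonconst w'"
    using nonconst_moebius[where a = 1 and b = "-2" and c = 1 and d = 2]
      nonconst_moebius[where a = 2 and b = 2 and c = "-1" and d = 1]
    by (simp_all add: w_def w'_def rpoly_pCons algebra_simps)
  have w_eqs: "1 + w = 2 * X / (X + 2)" "1 - w = 4 / (X + 2)"
    by (simp_all add: w_def field_simps)
  have "rsubst w w' = 2 * (1 + w) / (1 - w)"
    using nc by (simp add: w'_def)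
  also have "\<dots> = X"
    unfolding w_eqs by (simp add: divide_divide_times_eq)
  finally have ww': "rsubst w w' = X" .
  let ?n = "(X - 1) / (X + 1)"
  have "{r. rsubst (inverse X) r = r} = range (rsubst (rsubst ?n (X^2)))"
    by (rule fixed_field_conj[OF cayley_transform(1,2) _ _ _ cayley_transform(3-5) fixed_neg_X])
      simp_all
  also have "rsubst ?n (X^2) = rsubst (X + inverse X) w"
  proof -
    have "X + inverse X - 2 = (X - 1)^2 / X" "X + inverse X + 2 = (X + 1)^2 / X"
      by (simp_all add: field_simps power2_eq_square)
    then have "rsubst (X + inverse X) w = ?n^2"
      by (simp add: w_def divide_divide_times_eq power_divide)
    then show ?thesis using cayley_transform(2) by simp
  qed
  also have "range (rsubst (rsubst (X + inverse X) w)) = range (rsubst (X + inverse X))"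
    using nc ww' by (intro range_rsubst_rsubst) simp_all
  finally show ?thesis .
qed

lemma rconst_ii [simp]: "rconst \<i> * rconst \<i> = -1"
  by (simp flip: rconst_mult)

lemma fixed_neg_inverse_X: "{r. rsubst (- inverse X) r = r} = range (rsubst (X - inverse X))"
proof -
  define m where "m = rconst \<i> * X"
  define n where "n = - rconst \<i> * X"
  have nc: "nonconst m" "nonconst n"
    using nonconst_moebius[where a = "\<i>" and b = 0 and c = 0 and d = 1]
      nonconst_moebius[where a = "- \<i>" and b = 0 and c = 0 and d = 1]
    by (simp_all add: m_def n_def rpoly_pCons mult.commute)
  have mn: "rsubst m n = X" and nm: "rsubst n m = X"
    using nc by (simp_all add: m_def n_def mult.assoc[symmetric])
  have conj: "rsubst m (- inverse X) = rsubst (inverse X) m"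
    using nc by (simp add: m_def) (simp add: field_simps)
  have "{r. rsubst (- inverse X) r = r} = range (rsubst (rsubst n (X + inverse X)))"
    by (rule fixed_field_conj[OF nc _ _ _ mn nm conj fixed_inverse_X]) simp_all
  also have "rsubst n (X + inverse X) = rsubst (X - inverse X) n"
    using nc by (simp add: n_def) (simp add: field_simps)
  also have "range (rsubst (rsubst (X - inverse X) n)) = range (rsubst (X - inverse X))"
    using nc nm by (intro range_rsubst_rsubst) simp_all
  finally show ?thesis .
qed

lemma fixed_neg_X_inverse_X:
  "{r. rsubst (- X) r = r \<and> rsubst (inverse X) r = r} = range (rsubst (X^2 + inverse (X^2)))"
proof (intro equalityI subsetI; clarsimp)
  fix r assume r: "rsubst (- X) r = r" "rsubst (inverse X) r = r"
  obtain s where s: "r = rsubst (X^2) s"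
    using r(1) fixed_neg_X by blast
  have "rsubst (X^2) (rsubst (inverse X) s) = rsubst (X^2) s"
    using r(2) by (simp add: s rsubst_rsubst power_inverse)
  then have "rsubst (inverse X) s = s" by simp
  then obtain u where "s = rsubst (X + inverse X) u"
    using fixed_inverse_X by blast
  then have "r = rsubst (X^2 + inverse (X^2)) u"
    by (simp add: s rsubst_rsubst)
  then show "r \<in> range (rsubst (X^2 + inverse (X^2)))" by blast
qed (simp_all add: rsubst_rsubst power_inverse add.commute)

section \<open>The function field of \<open>y\<^sup>2 = f(x)\<close>\<close>

lemma FF_simps [simp]:
  "carrier (FF f) = UNIV" "monoid.mult (FF f) = ff_mult f" "one (FF f) = (1, 0)"
  "zero (FF f) = (0, 0)" "add (FF f) = ff_add"
  by (simp_all add: FF_def)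

lemma ff_mult_Pair [simp]: "ff_mult f (a, b) (c, d) = (a * c + rpoly f * b * d, a * d + b * c)"
  by (simp add: ff_mult_def)

lemma ff_add_Pair [simp]: "ff_add (a, b) (c, d) = (a + c, b + d)"
  by (simp add: ff_add_def)

lemma cst_eq: "cst c = (rconst c, 0)"
  by (simp add: cst_def rconst_def)

lemma xx_eq: "xx = (X, 0)"
  by (simp add: xx_def X_def)

lemma ff_mult_commute: "ff_mult f u v = ff_mult f v u"
  by (cases u; cases v) (simp add: algebra_simps)

lemma ff_mult_assoc: "ff_mult f (ff_mult f u v) w = ff_mult f u (ff_mult f v w)"
  by (cases u; cases v; cases w) (simp add: algebra_simps)

lemma ff_mult_one [simp]: "ff_mult f (1, 0) u = u" "ff_mult f u (1, 0) = u"
  by (cases u; simp)+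

lemma ff_mult_zero [simp]: "ff_mult f (0, 0) u = (0, 0)" "ff_mult f u (0, 0) = (0, 0)"
  by (cases u; simp)+

lemma ff_mult_add_right: "ff_mult f u (ff_add v w) = ff_add (ff_mult f u v) (ff_mult f u w)"
  by (cases u; cases v; cases w) (simp add: algebra_simps)

lemma cring_FF: "cring (FF f)"
proof (rule cringI)
  show "abelian_group (FF f)"
  proof (rule abelian_groupI)
    fix x y z :: ffel
    show "x \<oplus>\<^bsub>FF f\<^esub> y \<oplus>\<^bsub>FF f\<^esub> z = x \<oplus>\<^bsub>FF f\<^esub> (y \<oplus>\<^bsub>FF f\<^esub> z)"
      by (cases x; cases y; cases z) (simp add: algebra_simps)
    show "x \<oplus>\<^bsub>FF f\<^esub> y = y \<oplus>\<^bsub>FF f\<^esub> x"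
      by (cases x; cases y) (simp add: algebra_simps)
    show "\<zero>\<^bsub>FF f\<^esub> \<oplus>\<^bsub>FF f\<^esub> x = x" by (cases x) simp
    show "\<exists>y\<in>carrier (FF f). y \<oplus>\<^bsub>FF f\<^esub> x = \<zero>\<^bsub>FF f\<^esub>"
      by (cases x) (rule bexI[of _ "(- fst x, - snd x)"], auto)
  qed auto
  show "comm_monoid (FF f)"
  proof (rule comm_monoidI)
    fix x y z :: ffel
    show "x \<otimes>\<^bsub>FF f\<^esub> y \<otimes>\<^bsub>FF f\<^esub> z = x \<otimes>\<^bsub>FF f\<^esub> (y \<otimes>\<^bsub>FF f\<^esub> z)"
      by (simp only: FF_simps ff_mult_assoc)
    show "x \<otimes>\<^bsub>FF f\<^esub> y = y \<otimes>\<^bsub>FF f\<^esub> x"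
      by (simp only: FF_simps ff_mult_commute[of f x])
  qed simp_all
  show "(x \<oplus>\<^bsub>FF f\<^esub> y) \<otimes>\<^bsub>FF f\<^esub> z = x \<otimes>\<^bsub>FF f\<^esub> z \<oplus>\<^bsub>FF f\<^esub> y \<otimes>\<^bsub>FF f\<^esub> z"
    for x y z :: ffel
    by (cases x; cases y; cases z) (simp add: algebra_simps)
qed

definition nonsquare :: "complex poly \<Rightarrow> bool" where
  "nonsquare f \<longleftrightarrow> (\<forall>r. r * r \<noteq> rpoly f)"

lemma nonsquare_of_simple_root:
  assumes root: "poly f c = 0" and simple: "poly (pderiv f) c \<noteq> 0"
  shows "nonsquare f"
  unfolding nonsquare_def
proof (intro allI notI)
  have "f \<noteq> 0" using simple by auto
  then have ord: "order c f = 1"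
    using order_pderiv[OF _ root] order_0I[OF simple] by simp
  fix r assume "r * r = rpoly f"
  moreover obtain p q where r: "r = Fract p q" "q \<noteq> 0" by (cases r)
  ultimately have "p * p = f * (q * q)"
    by (simp add: rpoly_def eq_fract)
  moreover have "p \<noteq> 0" using calculation \<open>f \<noteq> 0\<close> r(2) by auto
  ultimately have "order c p + order c p = 1 + order c q + order c q"
    using \<open>f \<noteq> 0\<close> r(2) ord by (metis order_mult mult_eq_0_iff add.assoc)
  then show False by presburger
qed

text \<open>The inverse is the conjugate divided by the norm \<open>r\<^sub>0\<^sup>2 - f r\<^sub>1\<^sup>2\<close>, which vanishes
  only at \<open>0\<close> when \<open>f\<close> is not a square.\<close>

definition ff_inv :: "complex poly \<Rightarrow> ffel \<Rightarrow> ffel" where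
  "ff_inv f z = (let d = fst z * fst z - rpoly f * snd z * snd z in (fst z / d, - snd z / d))"

lemma ff_mult_inv:
  assumes f: "nonsquare f" and z: "z \<noteq> (0, 0)"
  shows "ff_mult f z (ff_inv f z) = (1, 0)"
proof (cases z)
  case (Pair r0 r1)
  define d where "d = r0 * r0 - rpoly f * r1 * r1"
  have "d \<noteq> 0"
  proof
    assume d: "d = 0"
    show False
    proof (cases "r1 = 0")
      case True
      with d z Pair show False by (simp add: d_def)
    next
      case False
      with d have "(r0 / r1) * (r0 / r1) = rpoly f" by (simp add: d_def field_simps)
      with f show False unfolding nonsquare_def by blast
    qed
  qed
  moreover have "r0 * (r0 / d) + rpoly f * r1 * (- r1 / d) = (r0 * r0 - rpoly f * r1 * r1) / d"
    by (simp add: diff_divide_distrib)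
  ultimately show ?thesis
    by (simp add: Pair ff_inv_def Let_def flip: d_def)
qed

lemma ff_inv_unique:
  assumes "nonsquare f" "ff_mult f z w = (1, 0)"
  shows "ff_inv f z = w"
proof -
  have "ff_inv f z = ff_mult f (ff_mult f z w) (ff_inv f z)"
    by (simp add: assms(2))
  also have "\<dots> = ff_mult f w (ff_mult f z (ff_inv f z))"
    by (metis ff_mult_assoc ff_mult_commute)
  also have "\<dots> = w"
    using assms ff_mult_inv[OF assms(1), of z] by fastforce
  finally show ?thesis .
qed

lemma m_inv_FF:
  assumes "nonsquare f" "z \<noteq> (0, 0)"
  shows "inv\<^bsub>FF f\<^esub> z = ff_inv f z"
proof -
  interpret cring "FF f" by (rule cring_FF)
  show ?thesis by (rule comm_inv_char) (simp_all add: ff_mult_inv assms)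
qed

lemma ff_mult_eq_0_iff:
  assumes "nonsquare f"
  shows "ff_mult f z w = (0, 0) \<longleftrightarrow> z = (0, 0) \<or> w = (0, 0)"
proof
  assume zw: "ff_mult f z w = (0, 0)"
  show "z = (0, 0) \<or> w = (0, 0)"
  proof (rule disjCI)
    assume "w \<noteq> (0, 0)"
    then have "z = ff_mult f (ff_mult f z w) (ff_inv f w)"
      using ff_mult_inv[OF assms] by (simp add: ff_mult_assoc)
    then show "z = (0, 0)" by (simp add: zw)
  qed
qed auto

lemma ff_inv_nonzero: "nonsquare f \<Longrightarrow> z \<noteq> (0, 0) \<Longrightarrow> ff_inv f z \<noteq> (0, 0)"
  using ff_mult_inv[of f z] by auto

lemma ff_inv_ff_inv:
  assumes "nonsquare f" "z \<noteq> (0, 0)"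
  shows "ff_inv f (ff_inv f z) = z"
  using ff_mult_inv[OF assms] by (intro ff_inv_unique[OF assms(1)]) (metis ff_mult_commute)

lemma ff_inv_mult:
  assumes "nonsquare f" "z \<noteq> (0, 0)" "w \<noteq> (0, 0)"
  shows "ff_inv f (ff_mult f z w) = ff_mult f (ff_inv f z) (ff_inv f w)"
proof (rule ff_inv_unique[OF assms(1)])
  have "ff_mult f (ff_mult f z w) (ff_mult f (ff_inv f z) (ff_inv f w)) =
        ff_mult f (ff_mult f z (ff_inv f z)) (ff_mult f w (ff_inv f w))"
    by (metis ff_mult_assoc ff_mult_commute)
  then show "ff_mult f (ff_mult f z w) (ff_mult f (ff_inv f z) (ff_inv f w)) = (1, 0)"
    using ff_mult_inv assms by simp
qed

lemma ff_inv_rfun: "r \<noteq> 0 \<Longrightarrow> ff_inv f (r, 0) = (inverse r, 0)"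
  by (simp add: ff_inv_def field_simps)

section \<open>Quotients by lifts of substitutions\<close>

definition curve_subst :: "rfun \<Rightarrow> rfun \<Rightarrow> ffel \<Rightarrow> ffel" where
  "curve_subst u k z = (rsubst u (fst z), k * rsubst u (snd z))"

lemma curve_subst_Pair [simp]: "curve_subst u k (r0, r1) = (rsubst u r0, k * rsubst u r1)"
  by (simp add: curve_subst_def)

lemma hyp_inv_eq_curve_subst: "hyp_inv = curve_subst X (-1)"
  by (simp add: fun_eq_iff hyp_inv_def curve_subst_def)

lemma curve_subst_comp:
  "nonconst u \<Longrightarrow> nonconst v \<Longrightarrow>
    curve_subst u k \<circ> curve_subst v l = curve_subst (rsubst u v) (k * rsubst u l)"
  by (simp add: fun_eq_iff curve_subst_def rsubst_rsubst)

lemma fixed_by_twisted_subst_iff: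
  assumes u: "nonconst u" and e: "e \<noteq> 0" and k: "k * rsubst u e = e"
  shows "k * rsubst u r = r \<longleftrightarrow> rsubst u (r / e) = r / e"
proof -
  have "k \<noteq> 0" using k e by auto
  then have "rsubst u (r / e) = k * rsubst u r / (k * rsubst u e)"
    using u by simp
  also have "\<dots> = k * rsubst u r / e"
    by (simp only: k)
  finally show ?thesis using e by (simp add: divide_cancel_right)
qed

lemma fixed_by_curve_substs_iff:
  assumes e: "e \<noteq> 0" and U: "\<forall>(u, k) \<in> U. nonconst u \<and> k * rsubst u e = e"
    and fixed: "{r. \<forall>(u, k) \<in> U. rsubst u r = r} = range (rsubst t)"
  shows "(\<forall>s \<in> (\<lambda>(u, k). curve_subst u k) ` U. s z = z) \<longleftrightarrow>
    fst z \<in> range (rsubst t) \<and> snd z / e \<in> range (rsubst t)"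
proof -
  have fixed': "r \<in> range (rsubst t) \<longleftrightarrow> (\<forall>(u, k) \<in> U. rsubst u r = r)" for r
    using fixed by blast
  have twist: "(\<forall>(u, k) \<in> U. k * rsubst u r = r) \<longleftrightarrow> (\<forall>(u, k) \<in> U. rsubst u (r / e) = r / e)"
    for r
    using U fixed_by_twisted_subst_iff[OF _ e] by blast
  have "(\<forall>s \<in> (\<lambda>(u, k). curve_subst u k) ` U. s z = z) \<longleftrightarrow>
      (\<forall>(u, k) \<in> U. rsubst u (fst z) = fst z) \<and> (\<forall>(u, k) \<in> U. k * rsubst u (snd z) = snd z)"
    by (cases z) auto
  then show ?thesis by (simp only: twist fixed')
qed

text \<open>The fixed field is \<open>\<complex>(t) + \<complex>(t) e y\<close>, and \<open>x \<mapsto> t, y \<mapsto> e y\<close> identifies it with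
  the function field of \<open>y\<^sup>2 = g(x)\<close>.\<close>

lemma quotient_has_eq_curve_subst:
  assumes t: "nonconst t" and e: "e \<noteq> 0" and g: "rsubst t (rpoly g) = e^2 * rpoly f"
    and U: "\<forall>(u, k) \<in> U. nonconst u \<and> k * rsubst u e = e"
    and fixed: "{r. \<forall>(u, k) \<in> U. rsubst u r = r} = range (rsubst t)"
  shows "quotient_has_eq f ((\<lambda>(u, k). curve_subst u k) ` U) g"
proof -
  let ?Q = "quot_field f ((\<lambda>(u, k). curve_subst u k) ` U)"
  define h where "h z = (rsubst t (fst z), e * rsubst t (snd z))" for z
  have carrier_Q: "z \<in> carrier ?Q \<longleftrightarrow> fst z \<in> range (rsubst t) \<and> snd z / e \<in> range (rsubst t)"
    for z
    using fixed_by_curve_substs_iff[OF e U fixed, of z] by (simp add: quot_field_def)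
  have range_h: "range h = carrier ?Q"
  proof (intro equalityI subsetI)
    fix z assume "z \<in> carrier ?Q"
    then obtain a b where "fst z = rsubst t a" "snd z / e = rsubst t b"
      by (auto simp: carrier_Q)
    then have "z = h (a, b)" using e by (simp add: h_def prod_eq_iff field_simps)
    then show "z \<in> range h" by blast
  qed (use e in \<open>auto simp: carrier_Q h_def\<close>)
  have "inj h"
    using t e by (auto simp: inj_on_def h_def prod_eq_iff)
  have h: "h \<in> ring_iso (FF g) ?Q"
  proof (rule ring_iso_memI)
    show "h x \<in> carrier ?Q" for x
      using range_h by blast
    show "h (x \<otimes>\<^bsub>FF g\<^esub> y) = h x \<otimes>\<^bsub>?Q\<^esub> h y" for x y
      using t g by (cases x; cases y) (simp add: quot_field_def h_def algebra_simps power2_eq_square)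
    show "h (x \<oplus>\<^bsub>FF g\<^esub> y) = h x \<oplus>\<^bsub>?Q\<^esub> h y" for x y
      using t by (cases x; cases y) (simp add: quot_field_def h_def algebra_simps)
    show "h \<one>\<^bsub>FF g\<^esub> = \<one>\<^bsub>?Q\<^esub>"
      using t by (simp add: quot_field_def h_def)
    show "bij_betw h (carrier (FF g)) (carrier ?Q)"
      using range_h \<open>inj h\<close> by (simp add: bij_betw_def)
  qed
  have "inv_into UNIV h \<in> ring_iso ?Q (FF g)"
    using ring_iso_set_sym[OF cring.axioms(1)[OF cring_FF] h] by simp
  moreover have "inv_into UNIV h (cst c) = cst c" for c
  proof -
    have "h (cst c) = cst c" using t by (simp add: h_def cst_eq)
    then show ?thesis using \<open>inj h\<close> by (metis inv_f_f)
  qed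
  ultimately show ?thesis unfolding quotient_has_eq_def by blast
qed

lemma quotient_has_eq_curve_subst_single:
  assumes "nonconst t" "e \<noteq> 0" "rsubst t (rpoly g) = e^2 * rpoly f"
    and "nonconst u" "k * rsubst u e = e" "{r. rsubst u r = r} = range (rsubst t)"
  shows "quotient_has_eq f {curve_subst u k} g"
  using quotient_has_eq_curve_subst[of t e g f "{(u, k)}"] assms by simp

lemma quotient_has_eq_curve_subst_pair:
  assumes "nonconst t" "e \<noteq> 0" "rsubst t (rpoly g) = e^2 * rpoly f"
    and "nonconst u" "k * rsubst u e = e" "nonconst v" "l * rsubst v e = e"
    and "{r. rsubst u r = r \<and> rsubst v r = r} = range (rsubst t)"
  shows "quotient_has_eq f {curve_subst u k, curve_subst v l} g"
  using quotient_has_eq_curve_subst[of t e g f "{(u, k), (v, l)}"] assms by simp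

section \<open>Automorphisms lifting a substitution\<close>

lemma curve_aut_hom:
  assumes "curve_aut f s"
  shows "s (ff_mult f u v) = ff_mult f (s u) (s v)" "s (ff_add u v) = ff_add (s u) (s v)"
    "s (1, 0) = (1, 0)" "s (rconst c, 0) = (rconst c, 0)"
proof -
  have h: "s \<in> ring_hom (FF f) (FF f)" using assms by (simp add: curve_aut_def ring_iso_def)
  show "s (ff_mult f u v) = ff_mult f (s u) (s v)" using ring_hom_mult[OF h, of u v] by simp
  show "s (ff_add u v) = ff_add (s u) (s v)" using ring_hom_add[OF h, of u v] by simp
  show "s (1, 0) = (1, 0)" using ring_hom_one[OF h] by simp
  show "s (rconst c, 0) = (rconst c, 0)" using assms by (simp add: curve_aut_def cst_eq)
qed

lemma curve_aut_rfun:
  assumes s: "curve_aut f s" and x: "s xx = (t, 0)" and t: "nonconst t"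
  shows "s (r, 0) = (rsubst t r, 0)"
proof -
  have poly: "s (rpoly p, 0) = (poly_rfun p t, 0)" for p
  proof (induction p)
    case 0
    show ?case using curve_aut_hom(4)[OF s, of 0] by simp
  next
    case (pCons c p)
    have "(rpoly (pCons c p), 0) = ff_add (rconst c, 0) (ff_mult f xx (rpoly p, 0))"
      by (simp add: xx_eq rpoly_pCons)
    then show ?case using curve_aut_hom[OF s] x pCons.IH by simp
  qed
  show ?thesis
  proof (cases r)
    case (Fract p q)
    have "ff_mult f (rpoly q, 0) (r, 0) = (rpoly p, 0)"
      using Fract by (simp add: Fract_eq_divide)
    then have "ff_mult f (poly_rfun q t, 0) (s (r, 0)) = (poly_rfun p t, 0)"
      using curve_aut_hom(1)[OF s, of "(rpoly q, 0)" "(r, 0)"] poly by simp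
    moreover have "poly_rfun q t \<noteq> 0" using poly_rfun_nonzero[OF t] Fract by simp
    ultimately show ?thesis using Fract t
      by (cases "s (r, 0)") (auto simp: rsubst_Fract field_simps)
  qed
qed

lemma curve_aut_eq_curve_subst:
  assumes s: "curve_aut f s" and x: "s xx = (t, 0)" and t: "nonconst t"
    and f: "nonsquare f" and h: "rsubst t (rpoly f) = h^2 * rpoly f"
  shows "\<exists>\<epsilon>. (\<epsilon> = 1 \<or> \<epsilon> = -1) \<and> s = curve_subst t (\<epsilon> * h)"
proof -
  obtain a b where ab: "s (0, 1) = (a, b)" by fastforce
  have "ff_mult f (s (0, 1)) (s (0, 1)) = s (rpoly f, 0)"
    using curve_aut_hom(1)[OF s, of "(0, 1)" "(0, 1)"] by simp
  then have sq: "a * a + rpoly f * b * b = h^2 * rpoly f" "a * b + b * a = 0"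
    using curve_aut_rfun[OF s x t] h ab by simp_all
  have f0: "rpoly f \<noteq> 0" using f by (auto simp: nonsquare_def)
  have "b \<noteq> 0"
  proof
    assume "b = 0"
    then have "a * a = h^2 * rpoly f" using sq(1) by simp
    moreover have "h \<noteq> 0" using h f0 t poly_rfun_nonzero by auto
    ultimately have "(a / h) * (a / h) = rpoly f" by (simp add: field_simps power2_eq_square)
    with f show False unfolding nonsquare_def by blast
  qed
  with sq(2) have "a = 0" by simp
  with sq(1) f0 have "b * b = h * h" by (simp add: power2_eq_square)
  then obtain \<epsilon> where \<epsilon>: "\<epsilon> = 1 \<or> \<epsilon> = -1" "b = \<epsilon> * h"
    unfolding square_eq_iff by (metis mult_1 mult_minus1)
  have "s (r0, r1) = curve_subst t (\<epsilon> * h) (r0, r1)" for r0 r1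
  proof -
    have "(r0, r1) = ff_add (r0, 0) (ff_mult f (r1, 0) (0, 1))" by simp
    then have "s (r0, r1) = ff_add (s (r0, 0)) (ff_mult f (s (r1, 0)) (s (0, 1)))"
      using curve_aut_hom[OF s] by metis
    then show ?thesis using curve_aut_rfun[OF s x t] ab \<open>a = 0\<close> \<epsilon>(2) by (simp add: mult.commute)
  qed
  with \<epsilon>(1) show ?thesis by (intro exI[of _ \<epsilon>]) auto
qed

section \<open>Places fixed by an involution\<close>

locale curve_place =
  fixes f :: "complex poly" and V :: "ffel set"
  assumes nonsquare: "nonsquare f" and place: "place f V"
begin

definition maxideal :: "ffel set" where
  "maxideal = {z \<in> V. z = (0, 0) \<or> ff_inv f z \<notin> V}"

lemma subring: "subring V (FF f)"
  using place by (simp add: place_def)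

lemma add_mem: "u \<in> V \<Longrightarrow> v \<in> V \<Longrightarrow> ff_add u v \<in> V"
  using subringE(7)[OF subring] by simp

lemma mult_mem: "u \<in> V \<Longrightarrow> v \<in> V \<Longrightarrow> ff_mult f u v \<in> V"
  using subringE(6)[OF subring] by simp

lemma const_mem [simp]: "(rconst c, 0) \<in> V"
  using place by (auto simp: place_def cst_eq)

lemma zero_mem [simp]: "(0, 0) \<in> V" and one_mem [simp]: "(1, 0) \<in> V"
  using const_mem[of 0] const_mem[of 1] by simp_all

lemma mem_or_inv_mem:
  assumes "z \<noteq> (0, 0)"
  shows "z \<in> V \<or> ff_inv f z \<in> V"
proof -
  have "\<forall>z \<in> carrier (FF f). z \<noteq> \<zero>\<^bsub>FF f\<^esub> \<longrightarrow> z \<in> V \<or> inv\<^bsub>FF f\<^esub> z \<in> V"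
    using place unfolding place_def by blast
  then show ?thesis using assms m_inv_FF[OF nonsquare assms] by (metis FF_simps(1,4) UNIV_I)
qed

lemma zero_in_maxideal [simp]: "(0, 0) \<in> maxideal"
  by (simp add: maxideal_def)

lemma inv_in_maxideal: "z \<notin> V \<Longrightarrow> ff_inv f z \<in> maxideal"
  using mem_or_inv_mem[of z] ff_inv_ff_inv[OF nonsquare, of z]
  by (cases "z = (0, 0)") (auto simp: maxideal_def)

lemma unit_mult:
  assumes "z \<in> V - maxideal" "w \<in> V - maxideal"
  shows "ff_mult f z w \<in> V - maxideal"
  using assms nonsquare by (auto simp: maxideal_def ff_mult_eq_0_iff ff_inv_mult mult_mem)

lemma maxideal_mult:
  assumes z: "z \<in> maxideal" and w: "w \<in> V"
  shows "ff_mult f z w \<in> maxideal"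
proof (rule ccontr)
  assume "ff_mult f z w \<notin> maxideal"
  then have zw: "ff_mult f z w \<noteq> (0, 0)" "ff_inv f (ff_mult f z w) \<in> V"
    using mult_mem z w by (auto simp: maxideal_def)
  then have nz: "z \<noteq> (0, 0)" "w \<noteq> (0, 0)" by auto
  have "ff_mult f w (ff_inv f (ff_mult f z w)) = ff_mult f (ff_inv f z) (ff_mult f w (ff_inv f w))"
    unfolding ff_inv_mult[OF nonsquare nz] by (metis ff_mult_assoc ff_mult_commute)
  also have "\<dots> = ff_inv f z" using ff_mult_inv[OF nonsquare nz(2)] by simp
  finally have "ff_inv f z \<in> V" using mult_mem[OF w zw(2)] by simp
  then show False using z nz by (simp add: maxideal_def)
qed

lemma maxideal_uminus: "(a, b) \<in> maxideal \<Longrightarrow> (- a, - b) \<in> maxideal"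
  using maxideal_mult[OF _ const_mem[of "-1"]] by fastforce

lemma maxideal_add:
  assumes z: "z \<in> maxideal" and w: "w \<in> maxideal"
  shows "ff_add z w \<in> maxideal"
proof (cases "z = (0, 0) \<or> w = (0, 0)")
  case True
  then show ?thesis using z w by (cases z; cases w) auto
next
  case False
  then have nz: "z \<noteq> (0, 0)" "w \<noteq> (0, 0)" by auto
  have zV: "z \<in> V" "w \<in> V" using z w by (simp_all add: maxideal_def)
  define q where "q = ff_mult f z (ff_inv f w)"
  have "q \<noteq> (0, 0)"
    using nz ff_inv_nonzero[OF nonsquare nz(2)] by (simp add: q_def ff_mult_eq_0_iff[OF nonsquare])
  then consider "q \<in> V" | "ff_inv f q \<in> V" using mem_or_inv_mem by blast
  then show ?thesis
  proof cases
    case 1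
    have "ff_mult f w q = z"
      using ff_mult_inv[OF nonsquare nz(2)] unfolding q_def
      by (metis ff_mult_assoc ff_mult_commute ff_mult_one(2))
    then have "ff_add z w = ff_mult f w (ff_add q (1, 0))"
      unfolding ff_mult_add_right by (cases z; cases w) simp
    then show ?thesis using maxideal_mult[OF w add_mem[OF 1 one_mem]] by simp
  next
    case 2
    have "ff_inv f q = ff_mult f (ff_inv f z) w"
      using nz ff_inv_nonzero[OF nonsquare] unfolding q_def
      by (simp add: ff_inv_mult[OF nonsquare] ff_inv_ff_inv[OF nonsquare])
    then have "ff_add z w = ff_mult f z (ff_add (1, 0) (ff_inv f q))"
      using ff_mult_inv[OF nonsquare nz(1)] unfolding ff_mult_add_right
      by (simp flip: ff_mult_assoc)
    then show ?thesis using maxideal_mult[OF z add_mem[OF one_mem 2]] by simp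
  qed
qed

lemma maxideal_mult_cases:
  "z \<in> V \<Longrightarrow> w \<in> V \<Longrightarrow> ff_mult f z w \<in> maxideal \<Longrightarrow> z \<in> maxideal \<or> w \<in> maxideal"
  using unit_mult by blast

lemma const_notin_maxideal: "c \<noteq> 0 \<Longrightarrow> (rconst c, 0) \<notin> maxideal"
  using const_mem[of "inverse c"] by (simp add: maxideal_def ff_inv_rfun)

lemma mem_of_square_mem:
  assumes zz: "ff_mult f z z \<in> V"
  shows "z \<in> V"
proof (rule ccontr)
  assume z: "z \<notin> V"
  then have "z \<noteq> (0, 0)" by auto
  have m: "ff_inv f z \<in> maxideal" by (rule inv_in_maxideal[OF z])
  then have "ff_mult f (ff_mult f (ff_inv f z) (ff_inv f z)) (ff_mult f z z) \<in> maxideal"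
    using maxideal_mult maxideal_def zz by auto
  moreover have "ff_mult f (ff_mult f (ff_inv f z) (ff_inv f z)) (ff_mult f z z) = (1, 0)"
    using ff_mult_inv[OF nonsquare \<open>z \<noteq> (0, 0)\<close>] by (metis ff_mult_assoc ff_mult_commute ff_mult_one(1))
  ultimately show False using const_notin_maxideal[of 1] by simp
qed

lemma poly_rfun_mem: "(u, 0) \<in> V \<Longrightarrow> (poly_rfun p u, 0) \<in> V"
proof (induction p)
  case (pCons c p)
  have "(poly_rfun (pCons c p) u, 0) = ff_add (rconst c, 0) (ff_mult f (u, 0) (poly_rfun p u, 0))"
    by simp
  then show ?case using pCons add_mem mult_mem const_mem by metis
qed simp

text \<open>Otherwise every nonzero polynomial in \<open>x\<close> would be a unit at the place, since \<open>\<complex>\<close> is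
  algebraically closed; the place would then contain \<open>\<complex>(x)\<close> and \<open>y\<close>.\<close>

lemma residue_exists:
  assumes X: "(X, 0) \<in> V"
  shows "\<exists>c. (X - rconst c, 0) \<in> maxideal"
proof (rule ccontr)
  assume no_residue: "\<nexists>c. (X - rconst c, 0) \<in> maxideal"
  have poly_mem: "(rpoly p, 0) \<in> V" for p
    using poly_rfun_mem[OF X] by (simp add: poly_rfun_X)
  have poly_unit: "(rpoly p, 0) \<in> V - maxideal" if "p \<noteq> 0" for p
    using that
  proof (induction p rule: complex_poly_linear_induct)
    case (const c)
    then show ?case using const_notin_maxideal[of c] const_mem[of c] by (simp add: rconst_def)
  next
    case (linear z q)
    have factor: "(X - rconst z, 0) \<in> V - maxideal"
      using no_residue poly_mem[of "[:-z, 1:]"] by (simp add: rpoly_pCons)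
    have "(rpoly ([:-z, 1:] * q), 0) = ff_mult f (X - rconst z, 0) (rpoly q, 0)"
      by (simp add: rpoly_pCons rconst_mult_rpoly[symmetric] algebra_simps del: mult_pCons_left)
    then show ?case using unit_mult[OF factor linear.IH] by argo
  qed
  have rfun_mem: "(r, 0) \<in> V" for r
  proof (cases r)
    case (Fract p q)
    have "ff_inv f (rpoly q, 0) \<in> V"
      using poly_unit[OF Fract(2)] Fract(2) by (auto simp: maxideal_def)
    then have "(inverse (rpoly q), 0) \<in> V"
      using Fract(2) by (simp add: ff_inv_rfun)
    from mult_mem[OF poly_mem[of p] this] show ?thesis
      using Fract by (simp add: Fract_eq_divide divide_inverse)
  qed
  have y: "(0, 1) \<in> V"
    using rfun_mem[of "rpoly f"] by (intro mem_of_square_mem[of "(0, 1)"]) simp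
  have "(r0, r1) \<in> V" for r0 r1
    using add_mem[OF rfun_mem[of r0] mult_mem[OF rfun_mem[of r1] y]] by simp
  then show False using place by (auto simp: place_def)
qed

end

locale fixed_place = curve_place +
  fixes s :: "ffel \<Rightarrow> ffel"
  assumes involution: "curve_involution f s" and stable: "s ` V = V"
begin

lemma aut: "curve_aut f s"
  using involution by (simp add: curve_involution_def)

lemma s_s [simp]: "s (s z) = z"
  using involution unfolding curve_involution_def by (metis comp_apply id_apply)

lemma maxideal_image:
  assumes z: "z \<in> maxideal"
  shows "s z \<in> maxideal"
proof (rule ccontr)
  have zV: "z \<in> V" using z by (simp add: maxideal_def)
  then have szV: "s z \<in> V" using stable by blast
  assume "s z \<notin> maxideal"
  then have sz: "s z \<noteq> (0, 0)" "ff_inv f (s z) \<in> V"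
    using szV by (auto simp: maxideal_def)
  have "ff_mult f z (s (ff_inv f (s z))) = s (ff_mult f (s z) (ff_inv f (s z)))"
    using curve_aut_hom(1)[OF aut, of "s z"] by simp
  also have "\<dots> = (1, 0)"
    using ff_mult_inv[OF nonsquare sz(1)] curve_aut_hom(3)[OF aut] by simp
  finally have "ff_inv f z = s (ff_inv f (s z))"
    by (rule ff_inv_unique[OF nonsquare])
  then have "ff_inv f z \<in> V" using sz(2) stable by blast
  moreover have "z \<noteq> (0, 0)"
    using sz(1) curve_aut_hom(4)[OF aut, of 0] by auto
  ultimately show False using z by (simp add: maxideal_def)
qed

text \<open>At an \<open>s\<close>-stable place, \<open>w\<close> and \<open>s w\<close> have the same residue, so \<open>s\<close> cannot
  negate a function whose residue is a nonzero \<open>\<plusminus>d\<close>.\<close>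

lemma residue_not_negated:
  assumes w: "(a, b) \<in> V" and d: "d \<noteq> 0"
    and res: "ff_mult f (a - rconst d, b) (a + rconst d, b) \<in> maxideal"
    and neg: "ff_add (s (a, b)) (a, b) \<in> maxideal"
  shows False
proof -
  obtain p q where sw: "s (a, b) = (p, q)" by fastforce
  have not_res: "(a - rconst e, b) \<notin> maxideal" if "e \<noteq> 0" for e
  proof
    assume m: "(a - rconst e, b) \<in> maxideal"
    have "s (a - rconst e, b) = s (ff_add (a, b) (rconst (- e), 0))"
      by simp
    also have "\<dots> = (p - rconst e, q)"
      unfolding curve_aut_hom(2,4)[OF aut] sw by simp
    finally have "(- (p - rconst e), - q) \<in> maxideal"
      using maxideal_image[OF m] by (metis maxideal_uminus)
    from maxideal_add[OF neg[unfolded sw] this] have "(a + rconst e, b) \<in> maxideal"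
      by simp
    from maxideal_add[OF this maxideal_uminus[OF m]] have "(rconst (2 * e), 0) \<in> maxideal"
      by simp
    then show False using const_notin_maxideal[of "2 * e"] that by simp
  qed
  have "(a - rconst d, b) \<in> V" "(a + rconst d, b) \<in> V"
    using add_mem[OF w const_mem[of "- d"]] add_mem[OF w const_mem[of d]] by simp_all
  from maxideal_mult_cases[OF this res] show False
    using not_res[OF d] not_res[of "- d"] d by auto
qed

lemma not_negated_over_residue:
  assumes u: "(u - rconst c, 0) \<in> maxideal"
    and w: "ff_mult f (a, b) (a, b) = (poly_rfun f u, 0)"
    and d: "poly f c = d * d" "d \<noteq> 0"
    and neg: "ff_add (s (a, b)) (a, b) \<in> maxideal"
  shows False
proof -
  have "(u, 0) \<in> V"
    using add_mem[OF _ const_mem[of c], of "(u - rconst c, 0)"] u by (simp add: maxideal_def)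
  then have wV: "(a, b) \<in> V"
    using poly_rfun_mem w by (metis mem_of_square_mem)
  have "poly (f - [:poly f c:]) c = 0" by simp
  then have "[:-c, 1:] dvd f - [:poly f c:]" by (simp only: poly_eq_0_iff_dvd)
  then obtain Q where Q: "f - [:poly f c:] = [:-c, 1:] * Q" ..
  have "poly_rfun f u - rconst d * rconst d = (u - rconst c) * poly_rfun Q u"
    using arg_cong[OF Q, of "\<lambda>p. poly_rfun p u"] d(1) by (simp add: algebra_simps flip: rconst_mult)
  then have "ff_mult f (a - rconst d, b) (a + rconst d, b) = ff_mult f (u - rconst c, 0) (poly_rfun Q u, 0)"
    using w by (simp add: algebra_simps)
  then have "ff_mult f (a - rconst d, b) (a + rconst d, b) \<in> maxideal"
    using maxideal_mult[OF u poly_rfun_mem[OF \<open>(u, 0) \<in> V\<close>]] by simp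
  then show False by (rule residue_not_negated[OF wV d(2) _ neg])
qed

text \<open>An \<open>s\<close>-stable place lies over \<open>x = 0\<close> or \<open>x = \<infinity>\<close>, where \<open>y\<close> resp. \<open>y/x\<^sup>4\<close> has
  residue \<open>\<plusminus>1\<close>.\<close>

lemma no_fixed_place_neg_lift:
  assumes s: "s = curve_subst (- X) (-1)" and f0: "poly f 0 = 1"
    and f_recip: "rsubst (inverse X) (rpoly f) = rpoly f / X^8"
  shows False
proof (cases "(X, 0) \<in> V")
  case True
  obtain c where c: "(X - rconst c, 0) \<in> maxideal"
    using residue_exists[OF True] by blast
  have "s (X - rconst c, 0) \<in> maxideal" by (rule maxideal_image[OF c])
  then have "(- X - rconst c, 0) \<in> maxideal" by (simp add: s)
  from maxideal_add[OF c this] have "(rconst (-2 * c), 0) \<in> maxideal" by simp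
  then have "c = 0" using const_notin_maxideal[of "-2 * c"] by auto
  show False
    by (rule not_negated_over_residue[where u = X and c = 0 and d = 1 and a = 0 and b = 1])
      (use c \<open>c = 0\<close> f0 in \<open>simp_all add: s poly_rfun_X\<close>)
next
  case False
  then have "(inverse X, 0) \<in> maxideal"
    using inv_in_maxideal[OF False] ff_inv_rfun[of X f] by simp
  have "inverse X ^ 4 * inverse X ^ 4 = inverse (X ^ 8)"
    by (simp add: power_inverse flip: power_add inverse_mult_distrib)
  then have w: "ff_mult f (0, inverse X ^ 4) (0, inverse X ^ 4) = (poly_rfun f (inverse X), 0)"
    using f_recip by (simp add: divide_inverse mult.assoc)
  show False
    by (rule not_negated_over_residue[where c = 0 and d = 1, OF _ w])
      (use \<open>(inverse X, 0) \<in> maxideal\<close> f0 in \<open>simp_all add: s\<close>)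
qed

text \<open>An \<open>s\<close>-stable place lies over \<open>x = \<plusminus>1\<close>, where \<open>y\<close> has residue
  \<open>\<plusminus>\<surd>f(\<plusminus>1) \<noteq> 0\<close>.\<close>

lemma no_fixed_place_inverse_lift:
  assumes s: "s = curve_subst (inverse X) (- inverse (X^4))"
    and f_recip: "rsubst (inverse X) (rpoly f) = rpoly f / X^8"
    and f1: "poly f 1 \<noteq> 0" "poly f (-1) \<noteq> 0"
  shows False
proof -
  have swap: "s (X, 0) = (inverse X, 0)" "s (inverse X, 0) = (X, 0)"
    by (simp_all add: s)
  have "(X, 0) \<in> V \<or> (inverse X, 0) \<in> V"
    using mem_or_inv_mem[of "(X, 0)"] by (simp add: ff_inv_rfun)
  then have XV: "(X, 0) \<in> V" and IV: "(inverse X, 0) \<in> V"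
    using stable swap by (metis image_eqI)+
  obtain c where c: "(X - rconst c, 0) \<in> maxideal"
    using residue_exists[OF XV] by blast
  have "s (X - rconst c, 0) \<in> maxideal" by (rule maxideal_image[OF c])
  then have "(inverse X - rconst c, 0) \<in> maxideal" by (simp add: s)
  from maxideal_mult[OF this XV] have "(1 - rconst c * X, 0) \<in> maxideal"
    by (simp add: algebra_simps)
  from maxideal_add[OF this maxideal_mult[OF c const_mem[of c]]]
  have "(rconst (1 - c * c), 0) \<in> maxideal" by (simp add: algebra_simps)
  then have cc: "c * c = 1" using const_notin_maxideal[of "1 - c * c"] by auto
  then have "c = 1 \<or> c = -1" by (metis square_eq_iff mult_1)
  then have "poly f c \<noteq> 0" using f1 by auto
  define d where "d = csqrt (poly f c)"
  have d: "poly f c = d * d" "d \<noteq> 0"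
    using \<open>poly f c \<noteq> 0\<close> by (simp_all add: d_def flip: power2_eq_square)
  have "(X^4 - 1, 0) = ff_mult f (X - rconst c, 0) (poly_rfun [:c^3, c^2, c, 1:] X, 0)"
    using cc by (simp add: algebra_simps power2_eq_square power3_eq_cube power4_eq_xxxx flip: rconst_mult)
  then have "(X^4 - 1, 0) \<in> maxideal"
    using maxideal_mult[OF c poly_rfun_mem[OF XV]] by presburger
  moreover have "(0, 1) \<in> V"
    using poly_rfun_mem[OF XV, of f] by (intro mem_of_square_mem[of "(0, 1)"]) (simp add: poly_rfun_X)
  moreover have "(inverse X ^ 4, 0) \<in> V"
    using poly_rfun_mem[OF IV, of "monom 1 4"] by (simp add: poly_rfun_def poly_monom map_poly_monom)
  ultimately have "ff_mult f (ff_mult f (X^4 - 1, 0) (inverse X ^ 4, 0)) (0, 1) \<in> maxideal"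
    using maxideal_mult by blast
  moreover have "ff_mult f (ff_mult f (X^4 - 1, 0) (inverse X ^ 4, 0)) (0, 1) = ff_add (s (0, 1)) (0, 1)"
    by (simp add: s) (simp add: field_simps)
  ultimately show False
    by (intro not_negated_over_residue[OF c _ d]) (simp_all add: poly_rfun_X)
qed

end

lemma fixed_points_neg_lift:
  assumes "nonsquare f" "curve_involution f s" "s = curve_subst (- X) (-1)"
    and "poly f 0 = 1" "rsubst (inverse X) (rpoly f) = rpoly f / X^8"
  shows "fixed_points f s = {}"
  using fixed_place.no_fixed_place_neg_lift[of f _ s] assms
  by (auto simp: fixed_points_def fixed_place_def fixed_place_axioms_def curve_place_def)

lemma fixed_points_inverse_lift:
  assumes "nonsquare f" "curve_involution f s" "s = curve_subst (inverse X) (- inverse (X^4))"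
    and "rsubst (inverse X) (rpoly f) = rpoly f / X^8" "poly f 1 \<noteq> 0" "poly f (-1) \<noteq> 0"
  shows "fixed_points f s = {}"
  using fixed_place.no_fixed_place_inverse_lift[of f _ s] assms
  by (auto simp: fixed_points_def fixed_place_def fixed_place_axioms_def curve_place_def)

section \<open>The curve \<open>y\<^sup>2 = (x\<^sup>4 + a x\<^sup>2 + 1)(x\<^sup>4 + b x\<^sup>2 + 1)\<close>\<close>

definition curve_poly :: "complex \<Rightarrow> complex \<Rightarrow> complex poly" where
  "curve_poly a b = [:1, 0, a, 0, 1:] * [:1, 0, b, 0, 1:]"

lemma poly_rfun_quartic [simp]: "poly_rfun [:1, 0, a, 0, 1:] t = t^4 + rconst a * t^2 + 1"
  by (simp add: algebra_simps power2_eq_square power4_eq_xxxx)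

lemma rpoly_curve_poly: "rpoly (curve_poly a b) = (X^4 + rconst a * X^2 + 1) * (X^4 + rconst b * X^2 + 1)"
  unfolding curve_poly_def rpoly_mult unfolding poly_rfun_X[symmetric] poly_rfun_quartic ..

lemma nonsquare_curve_poly:
  assumes "a \<noteq> 2" "a \<noteq> -2" "a \<noteq> b"
  shows "nonsquare (curve_poly a b)"
proof -
  define F1 where "F1 = [:1, 0, a, 0, 1:]"
  define F2 where "F2 = [:1, 0, b, 0, 1:]"
  define s where "s = csqrt (a^2 - 4)"
  define c where "c = csqrt ((s - a) / 2)"
  have s2: "s^2 = a^2 - 4" by (simp add: s_def)
  have "s \<noteq> 0"
  proof
    assume "s = 0"
    then have "(a - 2) * (a + 2) = 0" using s2 by (simp add: algebra_simps power2_eq_square)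
    then show False using assms by (auto simp: add_eq_0_iff2)
  qed
  have c2: "2 * c^2 = s - a" by (simp add: c_def)
  have root: "(c^2)^2 + a * c^2 + 1 = 0"
  proof -
    have "4 * ((c^2)^2 + a * c^2 + 1) = (2 * c^2)^2 + 2 * a * (2 * c^2) + 4"
      by (simp add: algebra_simps power2_eq_square)
    also have "\<dots> = 0" unfolding c2 using s2 by (simp add: algebra_simps power2_eq_square)
    finally show ?thesis by (simp only: mult_eq_0_iff) simp
  qed
  then have "c \<noteq> 0" by auto
  have F1: "poly F1 c = 0"
    using root by (simp add: F1_def algebra_simps power2_eq_square power4_eq_xxxx)
  have "poly F2 c = ((c^2)^2 + a * c^2 + 1) + (b - a) * c^2"
    by (simp add: F2_def algebra_simps power2_eq_square power4_eq_xxxx)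
  also have "\<dots> = (b - a) * c^2"
    by (simp only: root add_0)
  finally have F2: "poly F2 c \<noteq> 0" using \<open>c \<noteq> 0\<close> assms(3) by simp
  have "poly (pderiv F1) c = 2 * c * (a + 2 * c^2)"
    by (simp add: F1_def pderiv_pCons algebra_simps power2_eq_square)
  also have "a + 2 * c^2 = s" using c2 by simp
  finally have dF1: "poly (pderiv F1) c \<noteq> 0" using \<open>c \<noteq> 0\<close> \<open>s \<noteq> 0\<close> by simp
  show ?thesis
    unfolding curve_poly_def F1_def[symmetric] F2_def[symmetric]
    by (rule nonsquare_of_simple_root[of _ c]) (simp_all add: F1 F2 dF1 pderiv_mult)
qed

lemma curve_poly_at_0: "poly (curve_poly a b) 0 = 1"
  by (simp add: curve_poly_def)

lemma curve_poly_at_1: "poly (curve_poly a b) 1 = (a + 2) * (b + 2)"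
  and curve_poly_at_neg_1: "poly (curve_poly a b) (-1) = (a + 2) * (b + 2)"
  by (simp_all add: curve_poly_def algebra_simps)

lemma rsubst_neg_X_curve_poly: "rsubst (- X) (rpoly (curve_poly a b)) = rpoly (curve_poly a b)"
  by (simp add: rpoly_curve_poly)

lemma quartic_at_inverse_X:
  "inverse X ^ 4 + rconst a * inverse X ^ 2 + 1 = (X^4 + rconst a * X^2 + 1) / X^4"
proof -
  have "inverse X ^ 4 * X ^ 4 = 1" "inverse X ^ 2 * X ^ 4 = X ^ 2"
    by (simp_all add: power_inverse field_simps)
  then have "(inverse X ^ 4 + rconst a * inverse X ^ 2 + 1) * X^4 = X^4 + rconst a * X^2 + 1"
    by (simp add: distrib_right mult.assoc add.commute)
  then show ?thesis by (simp add: eq_divide_eq)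
qed

lemma rsubst_inverse_X_curve_poly:
  "rsubst (inverse X) (rpoly (curve_poly a b)) = rpoly (curve_poly a b) / X^8"
proof -
  have "X^8 = X^4 * X^4" by (simp flip: power_add)
  then show ?thesis by (simp add: rpoly_curve_poly quartic_at_inverse_X)
qed

definition sigma0 :: "ffel \<Rightarrow> ffel" where
  "sigma0 = curve_subst (- X) 1"

definition tau0 :: "ffel \<Rightarrow> ffel" where
  "tau0 = curve_subst (inverse X) (inverse (X^4))"

lemma lift_of_neg_X_eq_sigma0:
  assumes "a \<noteq> 2" "a \<noteq> -2" "a \<noteq> b" and s: "curve_involution (curve_poly a b) s"
    and fp: "fixed_points (curve_poly a b) s \<noteq> {}" and x: "s xx = (- X, 0)"
  shows "s = sigma0"
proof -
  have nonsq: "nonsquare (curve_poly a b)" using assms(1-3) by (rule nonsquare_curve_poly)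
  have aut: "curve_aut (curve_poly a b) s" using s by (simp add: curve_involution_def)
  have "rsubst (- X) (rpoly (curve_poly a b)) = 1^2 * rpoly (curve_poly a b)"
    unfolding rsubst_neg_X_curve_poly by simp
  then obtain \<epsilon> where \<epsilon>: "\<epsilon> = 1 \<or> \<epsilon> = -1" "s = curve_subst (- X) (\<epsilon> * 1)"
    using curve_aut_eq_curve_subst[OF aut x nonconst_simps(1) nonsq] by blast
  have "\<epsilon> \<noteq> -1"
    using fixed_points_neg_lift[OF nonsq s] fp \<epsilon>(2)
    by (auto simp: curve_poly_at_0 rsubst_inverse_X_curve_poly)
  with \<epsilon> show ?thesis by (simp add: sigma0_def)
qed

lemma lift_of_inverse_X_eq_tau0:
  assumes "a \<noteq> 2" "a \<noteq> -2" "a \<noteq> b" "b \<noteq> -2" and s: "curve_involution (curve_poly a b) s"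
    and fp: "fixed_points (curve_poly a b) s \<noteq> {}" and x: "s xx = (inverse X, 0)"
  shows "s = tau0"
proof -
  have nonsq: "nonsquare (curve_poly a b)" using assms(1-3) by (rule nonsquare_curve_poly)
  have aut: "curve_aut (curve_poly a b) s" using s by (simp add: curve_involution_def)
  have "rsubst (inverse X) (rpoly (curve_poly a b)) = (inverse (X^4))^2 * rpoly (curve_poly a b)"
    unfolding rsubst_inverse_X_curve_poly by (simp add: field_simps flip: power_mult)
  then obtain \<delta> where \<delta>: "\<delta> = 1 \<or> \<delta> = -1" "s = curve_subst (inverse X) (\<delta> * inverse (X^4))"
    using curve_aut_eq_curve_subst[OF aut x nonconst_simps(2) nonsq] by blast
  have "poly (curve_poly a b) 1 \<noteq> 0" "poly (curve_poly a b) (-1) \<noteq> 0"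
    using assms(2,4) by (auto simp: curve_poly_at_1 curve_poly_at_neg_1 add_eq_0_iff2)
  then have "\<delta> \<noteq> -1"
    using fixed_points_inverse_lift[OF nonsq s] fp \<delta>(2)
    by (auto simp: rsubst_inverse_X_curve_poly)
  with \<delta> show ?thesis by (simp add: tau0_def)
qed

lemma curve_subst_compositions:
  "hyp_inv \<circ> sigma0 = curve_subst (- X) (-1)"
  "hyp_inv \<circ> tau0 = curve_subst (inverse X) (- inverse (X^4))"
  "sigma0 \<circ> tau0 = curve_subst (- inverse X) (inverse (X^4))"
  "hyp_inv \<circ> sigma0 \<circ> tau0 = curve_subst (- inverse X) (- inverse (X^4))"
  by (simp_all add: sigma0_def tau0_def hyp_inv_eq_curve_subst curve_subst_comp)

lemma quotient_iota_tau:
  "quotient_has_eq (curve_poly a b) {hyp_inv \<circ> tau0} ([:-4, 0, 1:] * [:a - 2, 0, 1:] * [:b - 2, 0, 1:])"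
  unfolding curve_subst_compositions
  by (rule quotient_has_eq_curve_subst_single
      [where t = "X + inverse X" and e = "(X - inverse X) / X^2"])
    (simp_all add: fixed_inverse_X rpoly_curve_poly,
     simp_all add: field_simps power2_eq_square power4_eq_xxxx)

lemma quotient_iota_sigma:
  "quotient_has_eq (curve_poly a b) {hyp_inv \<circ> sigma0} ([:0, 1:] * [:1, a, 1:] * [:1, b, 1:])"
  unfolding curve_subst_compositions
  by (rule quotient_has_eq_curve_subst_single[where t = "X^2" and e = "X"])
    (simp_all add: fixed_neg_X rpoly_curve_poly,
     simp_all add: field_simps power2_eq_square power4_eq_xxxx)

lemma quotient_iota_sigma_tau:
  "quotient_has_eq (curve_poly a b) {hyp_inv \<circ> sigma0 \<circ> tau0} ([:4, 0, 1:] * [:a + 2, 0, 1:] * [:b + 2, 0, 1:])"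
  unfolding curve_subst_compositions(4)
  by (rule quotient_has_eq_curve_subst_single
      [where t = "X - inverse X" and e = "(X + inverse X) / X^2"])
    (simp_all add: fixed_neg_inverse_X rpoly_curve_poly,
     simp_all add: field_simps power2_eq_square power4_eq_xxxx)

lemma quotient_tau:
  "quotient_has_eq (curve_poly a b) {tau0} ([:a - 2, 0, 1:] * [:b - 2, 0, 1:])"
  unfolding tau0_def
  by (rule quotient_has_eq_curve_subst_single[where t = "X + inverse X" and e = "inverse (X^2)"])
    (simp_all add: fixed_inverse_X rpoly_curve_poly,
     simp_all add: field_simps power2_eq_square power4_eq_xxxx)

lemma quotient_sigma:
  "quotient_has_eq (curve_poly a b) {sigma0} ([:1, a, 1:] * [:1, b, 1:])"
  unfolding sigma0_def
  by (rule quotient_has_eq_curve_subst_single[where t = "X^2" and e = "1"])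
    (simp_all add: fixed_neg_X rpoly_curve_poly,
     simp_all add: field_simps power2_eq_square power4_eq_xxxx)

lemma quotient_sigma_tau:
  "quotient_has_eq (curve_poly a b) {sigma0 \<circ> tau0} ([:a + 2, 0, 1:] * [:b + 2, 0, 1:])"
  unfolding curve_subst_compositions
  by (rule quotient_has_eq_curve_subst_single[where t = "X - inverse X" and e = "inverse (X^2)"])
    (simp_all add: fixed_neg_inverse_X rpoly_curve_poly,
     simp_all add: field_simps power2_eq_square power4_eq_xxxx)

lemma quotient_iota_sigma_and_iota_tau:
  "quotient_has_eq (curve_poly a b) {hyp_inv \<circ> sigma0, hyp_inv \<circ> tau0} ([:a, 1:] * [:b, 1:] * [:-2, 1:])"
  unfolding curve_subst_compositions
  by (rule quotient_has_eq_curve_subst_pair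
      [where t = "X^2 + inverse (X^2)" and e = "(X - inverse X) / X^2"])
    (simp_all add: fixed_neg_X_inverse_X rpoly_curve_poly,
     simp_all add: field_simps power2_eq_square power4_eq_xxxx)

lemma quotient_iota_tau_and_sigma:
  "quotient_has_eq (curve_poly a b) {hyp_inv \<circ> tau0, sigma0} ([:a, 1:] * [:b, 1:] * [:-2, 1:] * [:2, 1:])"
  unfolding insert_commute[of "hyp_inv \<circ> tau0"]
  unfolding curve_subst_compositions(2) sigma0_def
  by (rule quotient_has_eq_curve_subst_pair
      [where t = "X^2 + inverse (X^2)" and e = "(X - inverse X) * (X + inverse X) / X^2"])
    (simp_all add: fixed_neg_X_inverse_X rpoly_curve_poly,
     simp_all add: field_simps power2_eq_square power4_eq_xxxx)

lemma quotient_iota_sigma_and_tau: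
  "quotient_has_eq (curve_poly a b) {hyp_inv \<circ> sigma0, tau0} ([:a, 1:] * [:b, 1:] * [:2, 1:])"
  unfolding curve_subst_compositions(1) tau0_def
  by (rule quotient_has_eq_curve_subst_pair
      [where t = "X^2 + inverse (X^2)" and e = "(X + inverse X) / X^2"])
    (simp_all add: fixed_neg_X_inverse_X rpoly_curve_poly,
     simp_all add: field_simps power2_eq_square power4_eq_xxxx)

theorem proposition4p3:
  fixes a b :: complex and \<sigma> \<tau> :: "ffel \<Rightarrow> ffel"
  defines "f \<equiv> [:1, 0, a, 0, 1:] * [:1, 0, b, 0, 1:]"
  defines "\<iota> \<equiv> hyp_inv"
  assumes "a \<notin> {-2, 2}" and "b \<notin> {-2, 2}" and "a \<noteq> b"
  assumes "curve_involution f \<sigma>" and "card (fixed_points f \<sigma>) = 4"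
      and "\<sigma> xx = (- rpoly [:0, 1:], 0)"
  assumes "curve_involution f \<tau>" and "card (fixed_points f \<tau>) = 4"
      and "\<tau> xx = (inverse (rpoly [:0, 1:]), 0)"
  shows "quotient_has_eq f {\<iota> \<circ> \<tau>} ([:-4, 0, 1:] * [:a - 2, 0, 1:] * [:b - 2, 0, 1:]) \<and>
         quotient_has_eq f {\<iota> \<circ> \<sigma>} ([:0, 1:] * [:1, a, 1:] * [:1, b, 1:]) \<and>
         quotient_has_eq f {\<iota> \<circ> \<sigma> \<circ> \<tau>} ([:4, 0, 1:] * [:a + 2, 0, 1:] * [:b + 2, 0, 1:]) \<and>
         quotient_has_eq f {\<tau>} ([:a - 2, 0, 1:] * [:b - 2, 0, 1:]) \<and>
         quotient_has_eq f {\<sigma>} ([:1, a, 1:] * [:1, b, 1:]) \<and>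
         quotient_has_eq f {\<sigma> \<circ> \<tau>} ([:a + 2, 0, 1:] * [:b + 2, 0, 1:]) \<and>
         quotient_has_eq f {\<iota> \<circ> \<sigma>, \<iota> \<circ> \<tau>} ([:a, 1:] * [:b, 1:] * [:-2, 1:]) \<and>
         quotient_has_eq f {\<iota> \<circ> \<tau>, \<sigma>} ([:a, 1:] * [:b, 1:] * [:-2, 1:] * [:2, 1:]) \<and>
         quotient_has_eq f {\<iota> \<circ> \<sigma>, \<tau>} ([:a, 1:] * [:b, 1:] * [:2, 1:])"
proof -
  have f: "f = curve_poly a b" by (simp add: f_def curve_poly_def)
  have "fixed_points f \<sigma> \<noteq> {}" "fixed_points f \<tau> \<noteq> {}"
    using assms(7,10) by auto
  then have "\<sigma> = sigma0" "\<tau> = tau0"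
    using lift_of_neg_X_eq_sigma0[of a b \<sigma>] lift_of_inverse_X_eq_tau0[of a b \<tau>] assms
    by (simp_all add: f flip: X_def)
  then show ?thesis
    unfolding \<iota>_def f
    using quotient_iota_tau quotient_iota_sigma quotient_iota_sigma_tau quotient_tau quotient_sigma
      quotient_sigma_tau quotient_iota_sigma_and_iota_tau quotient_iota_tau_and_sigma
      quotient_iota_sigma_and_tau
    by simp
qed

end
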